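(* Consider ${\sf BubbleRank}$ (defined below) run for $n$ steps with parameter $\delta\in(0,1)$ and initial list $\mathcal{R}_0$ in a stochastic click bandit satisfying A1–A5 with $\alpha(1)>\dots>\alpha(K)>0$. Let $$\mathbf{P}_t=\{(i,j)\in[K]^2: i<j,\ |\bar{\mathbf{R}}_t^{-1}(i)-\bar{\mathbf{R}}_t^{-1}(j)|=1,\ \mathbf{s}_{t-1}(i,j)\le2\sqrt{\mathbf{n}_{t-1}(i,j)\log(1/\delta)}\}$$ and $\mathbf{P}=\bigcup_{t=1}^n\mathbf{P}_t$. Then on the event $\mathcal{E}$ defined below, $|\mathbf{P}|\le K-1+2|\mathcal{V}_0|$.
   Context: Model. Items $[K]$; a list $\mathcal{R}$ orders all $K$ items, $\mathcal{R}(k)$ is the item at position $k$, $\mathcal{R}^{-1}(i)$ the position of $i$; $\Pi_K$ the set of lists. At time $t$, $(\mathbf{A}_t,\mathbf{X}_t)\in\{0,1\}^K\times\{0,1\}^{\Pi_K\times[K]}$ is drawn i.i.d. from a product distribution; the learner displays $\mathbf{R}_t$ and observes $\mathbf{c}_t(k)=\mathbf{X}_t(\mathbf{R}_t,k)\mathbf{A}_t(\mathbf{R}_t(k))$. $\alpha=\mathbb{E}[\mathbf{A}_t]$, $\chi=\mathbb{E}[\mathbf{X}_t]$, $r(\mathcal{R},\alpha,\chi)=\sum_k\chi(\mathcal{R},k)\alpha(\mathcal{R}(k))$, $\mathcal{R}^*=(1,\dots,K)$. Assumptions for all lists $\mathcal{R},\mathcal{R}'$ and positions $k<\ell$: (A1)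 $r(\mathcal{R},\alpha,\chi)\le r(\mathcal{R}^*,\alpha,\chi)$; (A2) $\{\mathcal{R}(1..k-1)\}=\{\mathcal{R}'(1..k-1)\}\Rightarrow\chi(\mathcal{R},k)=\chi(\mathcal{R}',k)$; (A3) $\chi(\mathcal{R},k)\ge\chi(\mathcal{R},\ell)$; (A4) if $\mathcal{R},\mathcal{R}'$ differ only by exchanging items at positions $k,\ell$, then $\alpha(\mathcal{R}(k))\le\alpha(\mathcal{R}(\ell))\iff\chi(\mathcal{R},\ell)\ge\chi(\mathcal{R}',\ell)$; (A5) $\chi(\mathcal{R},k)\ge\chi(\mathcal{R}^*,k)$. $\mathcal{V}(\mathcal{R})=\{(i,j)\in[K]^2:i<j,\ \mathcal{R}^{-1}(i)>\mathcal{R}^{-1}(j)\}$, $\mathcal{V}_0=\mathcal{V}(\mathcal{R}_0)$. Algorithm ${\sf BubbleRank}$: $\mathbf{s}_0\equiv\mathbf{n}_0\equiv0$, $\bar{\mathbf{R}}_1=\mathcal{R}_0$. For $t=1,\dots,n$: $h=t\bmod2$, $\mathbf{R}_t\leftarrow\bar{\mathbf{R}}_t$; for $k=1,\dots,\lfloor(K-h)/2\rfloor$ with $i=\mathbf{R}_t(2k-1+h)$, $j=\mathbf{R}_t(2k+h)$: if $\mathbf{s}_{t-1}(i,j)\le2\sqrt{\mathbf{n}_{t-1}(i,j)\log(1/\delta)}$ exchange these two positions with probability $1/2$. Display $\mathbf{R}_t$, observe $\mathbf{c}_t$. $\mathbf{s}_t=\mathbf{s}_{t-1}$, $\mathbf{n}_t=\mathbf{n}_{t-1}$;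 for each such $k$ with $i=\mathbf{R}_t(2k-1+h)$, $j=\mathbf{R}_t(2k+h)$: if $|\mathbf{c}_t(2k-1+h)-\mathbf{c}_t(2k+h)|=1$, add $\mathbf{c}_t(2k-1+h)-\mathbf{c}_t(2k+h)$ to $\mathbf{s}_t(i,j)$, its negative to $\mathbf{s}_t(j,i)$, and $1$ to $\mathbf{n}_t(i,j),\mathbf{n}_t(j,i)$. Then $\bar{\mathbf{R}}_{t+1}=\bar{\mathbf{R}}_t$; for $k=1,\dots,K-1$ in order with $i=\bar{\mathbf{R}}_{t+1}(k)$, $j=\bar{\mathbf{R}}_{t+1}(k+1)$: if $\mathbf{s}_t(j,i)>2\sqrt{\mathbf{n}_t(j,i)\log(1/\delta)}$ exchange positions $k,k+1$ of $\bar{\mathbf{R}}_{t+1}$. Event $\mathcal{E}=\bigcap_{t\in[n]}(\mathcal{E}_{t,1}\cap\mathcal{E}_{t,2})$, where $\mathcal{E}_{t,1}$: for all $i<j$, $\frac{\alpha(i)-\alpha(j)}{\alpha(i)+\alpha(j)}\mathbf{n}_t(i,j)-2\sqrt{\mathbf{n}_t(i,j)\log(1/\delta)}\le\mathbf{s}_t(i,j)$; and $\mathcal{E}_{t,2}$: for all $i>j$, $\mathbf{s}_t(i,j)\le2\sqrt{\mathbf{n}_t(i,j)\log(1/\delta)}$. *)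

theory Defs
  imports Complex_Main
begin

definition perms :: "nat \<Rightarrow> nat list set" where
  "perms K = {R. distinct R \<and> set R = {1..K}}"

definition item :: "nat list \<Rightarrow> nat \<Rightarrow> nat" where
  "item R k = R ! (k - 1)"

definition pos :: "nat list \<Rightarrow> nat \<Rightarrow> nat" where
  "pos R i = (THE k. 1 \<le> k \<and> k \<le> length R \<and> R ! (k - 1) = i)"

definition swap_pos :: "nat list \<Rightarrow> nat \<Rightarrow> nat \<Rightarrow> nat list" where
  "swap_pos R k l = R[k - 1 := R ! (l - 1), l - 1 := R ! (k - 1)]"

definition opt_list :: "nat \<Rightarrow> nat list" where
  "opt_list K = [1..<K+1]"

definition reward :: "nat \<Rightarrow> nat list \<Rightarrow> (nat \<Rightarrow> real) \<Rightarrow> (nat list \<Rightarrow> nat \<Rightarrow> real) \<Rightarrow> real" where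
  "reward K R \<alpha> \<chi> = (\<Sum>k=1..K. \<chi> R k * \<alpha> (item R k))"

definition inversions :: "nat \<Rightarrow> nat list \<Rightarrow> (nat \<times> nat) set" where
  "inversions K R = {(i, j). i \<in> {1..K} \<and> j \<in> {1..K} \<and> i < j \<and> pos R i > pos R j}"

definition click_model_assms ::
  "nat \<Rightarrow> (nat \<Rightarrow> real) \<Rightarrow> (nat list \<Rightarrow> nat \<Rightarrow> real) \<Rightarrow> bool" where
  "click_model_assms K \<alpha> \<chi> \<longleftrightarrow>
     (\<forall>R\<in>perms K. reward K R \<alpha> \<chi> \<le> reward K (opt_list K) \<alpha> \<chi>) \<and>
     (\<forall>R\<in>perms K. \<forall>R'\<in>perms K. \<forall>k\<in>{1..K}.
        set (take (k - 1) R) = set (take (k - 1) R') \<longrightarrow> \<chi> R k = \<chi> R' k) \<and>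
     (\<forall>R\<in>perms K. \<forall>k l. 1 \<le> k \<and> k < l \<and> l \<le> K \<longrightarrow> \<chi> R k \<ge> \<chi> R l) \<and>
     (\<forall>R\<in>perms K. \<forall>k l. 1 \<le> k \<and> k < l \<and> l \<le> K \<longrightarrow>
        (\<alpha> (item R k) \<le> \<alpha> (item R l) \<longleftrightarrow> \<chi> R l \<ge> \<chi> (swap_pos R k l) l)) \<and>
     (\<forall>R\<in>perms K. \<forall>k\<in>{1..K}. \<chi> R k \<ge> \<chi> (opt_list K) k)"

definition thr :: "real \<Rightarrow> nat \<Rightarrow> real" where
  "thr \<delta> m = 2 * sqrt (real m * ln (1 / \<delta>))"

type_synonym br_state = "nat list \<times> (nat \<Rightarrow> nat \<Rightarrow> int) \<times> (nat \<Rightarrow> nat \<Rightarrow> nat)"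

text \<open>Displayed list R_t obtained from the leader list; coin t k is the outcome of the
  fair coin used for the k-th pair at time t.\<close>
definition display_list ::
  "nat \<Rightarrow> real \<Rightarrow> (nat \<Rightarrow> nat \<Rightarrow> bool) \<Rightarrow> nat \<Rightarrow> nat list
    \<Rightarrow> (nat \<Rightarrow> nat \<Rightarrow> int) \<Rightarrow> (nat \<Rightarrow> nat \<Rightarrow> nat) \<Rightarrow> nat list" where
  "display_list K \<delta> coin t Rb s n =
     (let h = t mod 2 in
      foldl (\<lambda>R k. let i = item R (2*k - 1 + h); j = item R (2*k + h) in
                   if real_of_int (s i j) \<le> thr \<delta> (n i j) \<and> coin t k
                   then swap_pos R (2*k - 1 + h) (2*k + h) else R)
        Rb [1..<(K - h) div 2 + 1])"

definition clicks ::
  "(nat \<Rightarrow> nat \<Rightarrow> bool) \<Rightarrow> (nat \<Rightarrow> nat list \<Rightarrow> nat \<Rightarrow> bool) \<Rightarrow> nat \<Rightarrow> nat list \<Rightarrow> nat \<Rightarrow> int" where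
  "clicks A X t Rt k = (if X t Rt k \<and> A t (item Rt k) then 1 else 0)"

definition update_stats ::
  "nat \<Rightarrow> nat \<Rightarrow> nat list \<Rightarrow> (nat \<Rightarrow> int)
    \<Rightarrow> (nat \<Rightarrow> nat \<Rightarrow> int) \<times> (nat \<Rightarrow> nat \<Rightarrow> nat)
    \<Rightarrow> (nat \<Rightarrow> nat \<Rightarrow> int) \<times> (nat \<Rightarrow> nat \<Rightarrow> nat)" where
  "update_stats K t Rt c sn0 =
     (let h = t mod 2 in
      foldl (\<lambda>(s, n) k.
               let a = 2*k - 1 + h; b = 2*k + h; i = item Rt a; j = item Rt b; d = c a - c b in
               if \<bar>d\<bar> = 1 then
                 ((\<lambda>x y. if x = i \<and> y = j then s x y + d
                          else if x = j \<and> y = i then s x y - d else s x y),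
                  (\<lambda>x y. if (x = i \<and> y = j) \<or> (x = j \<and> y = i) then n x y + 1 else n x y))
               else (s, n))
        sn0 [1..<(K - h) div 2 + 1])"

definition leader_update ::
  "nat \<Rightarrow> real \<Rightarrow> (nat \<Rightarrow> nat \<Rightarrow> int) \<Rightarrow> (nat \<Rightarrow> nat \<Rightarrow> nat) \<Rightarrow> nat list \<Rightarrow> nat list" where
  "leader_update K \<delta> s n Rb =
     foldl (\<lambda>R k. let i = item R k; j = item R (k + 1) in
                  if real_of_int (s j i) > thr \<delta> (n j i) then swap_pos R k (k + 1) else R)
       Rb [1..<K]"

definition br_step ::
  "nat \<Rightarrow> real \<Rightarrow> (nat \<Rightarrow> nat \<Rightarrow> bool) \<Rightarrow> (nat \<Rightarrow> nat \<Rightarrow> bool)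
    \<Rightarrow> (nat \<Rightarrow> nat list \<Rightarrow> nat \<Rightarrow> bool) \<Rightarrow> nat \<Rightarrow> br_state \<Rightarrow> br_state" where
  "br_step K \<delta> coin A X t st =
     (case st of (Rb, s, n) \<Rightarrow>
       (let Rt = display_list K \<delta> coin t Rb s n;
            c = clicks A X t Rt;
            sn' = update_stats K t Rt c (s, n)
        in (leader_update K \<delta> (fst sn') (snd sn') Rb, fst sn', snd sn')))"

text \<open>br_run ... t = (leader list for time t+1, s_t, n_t).\<close>
fun br_run ::
  "nat \<Rightarrow> real \<Rightarrow> (nat \<Rightarrow> nat \<Rightarrow> bool) \<Rightarrow> (nat \<Rightarrow> nat \<Rightarrow> bool)
    \<Rightarrow> (nat \<Rightarrow> nat list \<Rightarrow> nat \<Rightarrow> bool) \<Rightarrow> nat list \<Rightarrow> nat \<Rightarrow> br_state" where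
  "br_run K \<delta> coin A X R0 0 = (R0, (\<lambda>_ _. 0), (\<lambda>_ _. 0))"
| "br_run K \<delta> coin A X R0 (Suc t) = br_step K \<delta> coin A X (Suc t) (br_run K \<delta> coin A X R0 t)"

definition event_E ::
  "nat \<Rightarrow> real \<Rightarrow> (nat \<Rightarrow> real) \<Rightarrow> nat \<Rightarrow> (nat \<Rightarrow> br_state) \<Rightarrow> bool" where
  "event_E K \<delta> \<alpha> horizon run \<longleftrightarrow>
     (\<forall>t\<in>{1..horizon}.
        let s = fst (snd (run t)); n = snd (snd (run t)) in
        (\<forall>i\<in>{1..K}. \<forall>j\<in>{1..K}. i < j \<longrightarrow>
            (\<alpha> i - \<alpha> j) / (\<alpha> i + \<alpha> j) * real (n i j) - thr \<delta> (n i j) \<le> real_of_int (s i j)) \<and>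
        (\<forall>i\<in>{1..K}. \<forall>j\<in>{1..K}. i > j \<longrightarrow> real_of_int (s i j) \<le> thr \<delta> (n i j)))"

definition P_set :: "nat \<Rightarrow> real \<Rightarrow> (nat \<Rightarrow> br_state) \<Rightarrow> nat \<Rightarrow> (nat \<times> nat) set" where
  "P_set K \<delta> run t =
     (let Rb = fst (run (t - 1)); s = fst (snd (run (t - 1))); n = snd (snd (run (t - 1))) in
      {(i, j). i \<in> {1..K} \<and> j \<in> {1..K} \<and> i < j \<and>
               \<bar>int (pos Rb i) - int (pos Rb j)\<bar> = 1 \<and>
               real_of_int (s i j) \<le> thr \<delta> (n i j)})"

end

theory Submission
  imports Defs "HOL-Combinatorics.Transposition"
begin

(* On the event E a leader update never exchanges two adjacent items that are already in the
   right order (that would need s(j,i) above the threshold for some j > i), so it is a sequence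
   of adjacent transpositions each of which removes exactly one inversion. Such a transposition
   makes at most two pairs adjacent that were not adjacent before. Hence the number of pairs that
   have ever been adjacent in the leader list, plus twice the number of inversions of the
   current leader list, never exceeds K - 1 + 2 |V0|; and every pair in P_t is adjacent in the
   leader list. *)

lemma pos_nth:
  assumes "distinct R" "m < length R"
  shows "pos R (R ! m) = Suc m"
  unfolding pos_def
proof (rule the_equality)
  fix p assume p: "1 \<le> p \<and> p \<le> length R \<and> R ! (p - 1) = R ! m"
  then have "p - 1 < length R" by linarith
  with assms p have "p - 1 = m" by (simp add: nth_eq_iff_index_eq)
  with p show "p = Suc m" by arith
qed (use assms in simp)

lemma pos_in_set:
  assumes "distinct R" "x \<in> set R"
  shows "1 \<le> pos R x" "pos R x \<le> length R" "R ! (pos R x - 1) = x"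
proof -
  obtain m where "m < length R" "x = R ! m" using assms(2) by (auto simp: in_set_conv_nth)
  with assms(1) show "1 \<le> pos R x" "pos R x \<le> length R" "R ! (pos R x - 1) = x"
    by (simp_all add: pos_nth)
qed

lemma inj_on_pos: "distinct R \<Longrightarrow> inj_on (pos R) (set R)"
  by (metis inj_onI pos_in_set(3))

lemma perms_length: "R \<in> perms K \<Longrightarrow> length R = K"
  using distinct_card[of R] by (auto simp: perms_def)

lemma swap_pos_adjacent:
  "1 \<le> k \<Longrightarrow> swap_pos R k (Suc k) = R[k - 1 := R ! k, k := R ! (k - 1)]"
  by (simp add: swap_pos_def)

lemma perms_swap_pos_adjacent:
  assumes "R \<in> perms K" "1 \<le> k" "k < K"
  shows "swap_pos R k (Suc k) \<in> perms K"
  using assms perms_length[OF assms(1)] by (simp add: perms_def swap_pos_adjacent)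

lemma pos_swap_pos_adjacent:
  assumes "distinct R" "1 \<le> k" "k < length R" "x \<in> set R"
  shows "pos (swap_pos R k (Suc k)) x = transpose k (Suc k) (pos R x)"
proof -
  obtain m where m: "m < length R" "x = R ! m" using assms(4) by (auto simp: in_set_conv_nth)
  let ?R' = "R[k - 1 := R ! k, k := R ! (k - 1)]"
  have "?R' ! transpose (k - 1) k m = x"
    using assms m by (auto simp: nth_list_update transpose_def)
  then have "pos ?R' x = Suc (transpose (k - 1) k m)"
    using m assms pos_nth[of ?R' "transpose (k - 1) k m"] by (auto simp: transpose_def)
  also have "\<dots> = transpose k (Suc k) (Suc m)" using assms(2) by (auto simp: transpose_def)
  finally show ?thesis using assms m by (simp add: swap_pos_adjacent pos_nth)
qed

lemma transpose_adjacent_less_iff: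
  fixes p q k :: nat
  assumes "{p, q} \<noteq> {k, Suc k}"
  shows "transpose k (Suc k) p < transpose k (Suc k) q \<longleftrightarrow> p < q"
  using assms by (auto simp: transpose_def doubleton_eq_iff)

definition adjacent_pair :: "nat list \<Rightarrow> nat \<Rightarrow> nat \<times> nat" where
  "adjacent_pair R m = (min (R ! m) (R ! Suc m), max (R ! m) (R ! Suc m))"

definition adjacent_pairs :: "nat list \<Rightarrow> (nat \<times> nat) set" where
  "adjacent_pairs R = adjacent_pair R ` {..<length R - 1}"

lemma finite_adjacent_pairs: "finite (adjacent_pairs R)"
  by (simp add: adjacent_pairs_def)

lemma card_adjacent_pairs_le: "card (adjacent_pairs R) \<le> length R - 1"
  unfolding adjacent_pairs_def by (metis card_image_le card_lessThan finite_lessThan)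

lemma adjacent_pair_pos:
  assumes "distinct R" "x \<in> set R" "y \<in> set R" "pos R y = Suc (pos R x)"
  shows "adjacent_pair R (pos R x - 1) = (min x y, max x y)" "pos R x - 1 < length R - 1"
  using assms pos_in_set[OF assms(1,2)] pos_in_set[OF assms(1,3)]
  by (auto simp: adjacent_pair_def)

lemma mem_adjacent_pairsI:
  assumes "distinct R" "i \<in> set R" "j \<in> set R" "i < j"
    and "\<bar>int (pos R i) - int (pos R j)\<bar> = 1"
  shows "(i, j) \<in> adjacent_pairs R"
proof -
  from assms(5) consider "pos R j = Suc (pos R i)" | "pos R i = Suc (pos R j)" by linarith
  then show ?thesis
  proof cases
    case 1
    from adjacent_pair_pos[OF assms(1-3) this] assms(4) show ?thesis
      by (force simp: adjacent_pairs_def)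
  next
    case 2
    from adjacent_pair_pos[OF assms(1,3,2) this] assms(4) show ?thesis
      by (force simp: adjacent_pairs_def)
  qed
qed

lemma adjacent_pairs_swap_pos_subset:
  assumes "1 \<le> k" "k < length R"
  shows "adjacent_pairs (swap_pos R k (Suc k)) \<subseteq> adjacent_pairs R \<union>
    {adjacent_pair (swap_pos R k (Suc k)) (k - 2), adjacent_pair (swap_pos R k (Suc k)) k}"
proof
  fix q assume "q \<in> adjacent_pairs (swap_pos R k (Suc k))"
  then obtain m where m: "m < length R - 1" "q = adjacent_pair (swap_pos R k (Suc k)) m"
    using assms by (auto simp: adjacent_pairs_def swap_pos_adjacent)
  show "q \<in> adjacent_pairs R \<union> {adjacent_pair (swap_pos R k (Suc k)) (k - 2),
    adjacent_pair (swap_pos R k (Suc k)) k}"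
  proof (cases "m = k - 2 \<or> m = k")
    case False
    then have "q = adjacent_pair R m"
      using m assms by (auto simp: adjacent_pair_def swap_pos_adjacent nth_list_update)
    with m(1) show ?thesis unfolding adjacent_pairs_def by blast
  qed (use m in auto)
qed

lemma finite_inversions: "finite (inversions K R)"
  by (rule finite_subset[of _ "{1..K} \<times> {1..K}"]) (auto simp: inversions_def)

lemma inversions_swap_pos_adjacent:
  assumes R: "R \<in> perms K" and k: "1 \<le> k" "k < K" and inv: "item R (Suc k) < item R k"
  defines "R' \<equiv> swap_pos R k (Suc k)"
  shows "inversions K R = insert (item R (Suc k), item R k) (inversions K R')"
    and "(item R (Suc k), item R k) \<notin> inversions K R'"
proof -
  let ?a = "item R k" and ?b = "item R (Suc k)"
  have d: "distinct R" and setR: "set R = {1..K}" and l: "length R = K"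
    using R perms_length[OF R] by (auto simp: perms_def)
  have ab: "?a \<in> {1..K}" "?b \<in> {1..K}" "pos R ?a = k" "pos R ?b = Suc k"
    using k d l setR nth_mem[of "k - 1" R] nth_mem[of k R] pos_nth[OF d, of "k - 1"] pos_nth[OF d, of k]
    by (auto simp: item_def)
  have pos': "pos R' x = transpose k (Suc k) (pos R x)" if "x \<in> {1..K}" for x
    using pos_swap_pos_adjacent[OF d k(1)] k that l setR by (simp add: R'_def)
  show "(?b, ?a) \<notin> inversions K R'"
    using ab by (simp add: inversions_def pos')
  have "(pos R' j < pos R' i) = (pos R j < pos R i)"
    if "i \<in> {1..K}" "j \<in> {1..K}" "i < j" "(i, j) \<noteq> (?b, ?a)" for i j
  proof -
    have "{pos R j, pos R i} \<noteq> {pos R ?a, pos R ?b}"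
    proof
      assume "{pos R j, pos R i} = {pos R ?a, pos R ?b}"
      then have "pos R ` {j, i} = pos R ` {?a, ?b}" by simp
      moreover have "{j, i} \<subseteq> set R" "{?a, ?b} \<subseteq> set R" using that(1,2) ab(1,2) setR by auto
      ultimately have "{j, i} = {?a, ?b}" using inj_on_image_eq_iff[OF inj_on_pos[OF d]] by blast
      with that(3,4) inv show False by (auto simp: doubleton_eq_iff)
    qed
    with that ab show ?thesis by (simp add: pos' transpose_adjacent_less_iff)
  qed
  then have "inversions K R - {(?b, ?a)} = inversions K R' - {(?b, ?a)}"
    by (auto simp: inversions_def)
  moreover have "(?b, ?a) \<in> inversions K R"
    using ab inv by (simp add: inversions_def)
  ultimately show "inversions K R = insert (?b, ?a) (inversions K R')"
    by blast
qed

definition bubble_step :: "nat list \<Rightarrow> nat list \<Rightarrow> bool" where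
  "bubble_step R R' \<longleftrightarrow>
     (\<exists>k. 1 \<le> k \<and> k < length R \<and> item R (Suc k) < item R k \<and> R' = swap_pos R k (Suc k))"

definition explored_within_budget :: "nat \<Rightarrow> nat list \<Rightarrow> (nat \<times> nat) set \<Rightarrow> nat list \<Rightarrow> bool" where
  "explored_within_budget K R0 U R \<longleftrightarrow> R \<in> perms K \<and> finite U \<and> adjacent_pairs R \<subseteq> U \<and>
     card U + 2 * card (inversions K R) \<le> K - 1 + 2 * card (inversions K R0)"

lemma explored_within_budget_start:
  "R0 \<in> perms K \<Longrightarrow> explored_within_budget K R0 (adjacent_pairs R0) R0"
  using card_adjacent_pairs_le[of R0] perms_length[of R0 K]
  by (simp add: explored_within_budget_def finite_adjacent_pairs)

lemma explored_within_budget_subset: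
  assumes "explored_within_budget K R0 U R" "adjacent_pairs R \<subseteq> V" "V \<subseteq> U"
  shows "explored_within_budget K R0 V R"
  using assms card_mono[of U V] finite_subset[of V U] by (auto simp: explored_within_budget_def)

lemma explored_within_budget_bubble_step:
  assumes "explored_within_budget K R0 U R" "bubble_step R R'"
  shows "explored_within_budget K R0 (U \<union> adjacent_pairs R') R'"
proof -
  have R: "R \<in> perms K" and U: "finite U" "adjacent_pairs R \<subseteq> U"
    using assms(1) by (auto simp: explored_within_budget_def)
  obtain k where k: "1 \<le> k" "k < K" "item R (Suc k) < item R k" and R': "R' = swap_pos R k (Suc k)"
    using assms(2) perms_length[OF R] by (auto simp: bubble_step_def)
  let ?p = "adjacent_pair R' (k - 2)" and ?q = "adjacent_pair R' k"
  have "U \<union> adjacent_pairs R' \<subseteq> insert ?p (insert ?q U)"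
    using adjacent_pairs_swap_pos_subset[of k R] k perms_length[OF R] U(2) R' by auto
  then have "card (U \<union> adjacent_pairs R') \<le> card (insert ?p (insert ?q U))"
    using U(1) by (intro card_mono) simp_all
  also have "\<dots> \<le> card U + 2"
    using U(1) by (simp add: card_insert_if)
  finally have "card (U \<union> adjacent_pairs R') \<le> card U + 2" .
  moreover have "card (inversions K R) = Suc (card (inversions K R'))"
    using inversions_swap_pos_adjacent[OF R k] finite_inversions R' by simp
  ultimately show ?thesis
    using assms(1) U(1) R' perms_swap_pos_adjacent[OF R k(1,2)]
    by (auto simp: explored_within_budget_def finite_adjacent_pairs)
qed

lemma explored_within_budget_bubble_steps:
  assumes "bubble_step\<^sup>*\<^sup>* R R'" "explored_within_budget K R0 U R"
  shows "explored_within_budget K R0 (U \<union> adjacent_pairs R') R'"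
  using assms
proof (induction rule: rtranclp_induct)
  case base
  then show ?case by (simp add: explored_within_budget_def Un_absorb2)
next
  case (step R1 R2)
  then have "explored_within_budget K R0 (U \<union> adjacent_pairs R1 \<union> adjacent_pairs R2) R2"
    by (simp add: explored_within_budget_bubble_step)
  then show ?case by (rule explored_within_budget_subset) auto
qed

lemma foldl_rtranclp:
  assumes "\<And>x k. P x \<Longrightarrow> k \<in> set ks \<Longrightarrow> r\<^sup>=\<^sup>= x (f x k)"
    and "\<And>x y. P x \<Longrightarrow> r x y \<Longrightarrow> P y" and "P x"
  shows "r\<^sup>*\<^sup>* x (foldl f x ks)"
  using assms
proof (induction ks arbitrary: x)
  case (Cons k ks)
  have step: "r\<^sup>=\<^sup>= x (f x k)" using Cons.prems by simp
  then have "P (f x k)" using Cons.prems(2,3) by auto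
  then have "r\<^sup>*\<^sup>* (f x k) (foldl f (f x k) ks)"
    by (rule Cons.IH[rotated 2]) (use Cons.prems in auto)
  moreover have "r\<^sup>*\<^sup>* x (f x k)" using step by auto
  ultimately show ?case by (auto intro: rtranclp_trans)
qed simp

lemma leader_swap_is_bubble_step:
  assumes R: "R \<in> perms K" and k: "1 \<le> k" "k < K"
    and E: "\<forall>x\<in>{1..K}. \<forall>y\<in>{1..K}. y < x \<longrightarrow> real_of_int (s x y) \<le> thr \<delta> (n x y)"
    and swap: "thr \<delta> (n (item R (k + 1)) (item R k)) < real_of_int (s (item R (k + 1)) (item R k))"
  shows "bubble_step R (swap_pos R k (k + 1))"
proof -
  have d: "distinct R" and setR: "set R = {1..K}" and l: "length R = K"
    using R perms_length[OF R] by (auto simp: perms_def)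
  have in_set: "item R k \<in> {1..K}" "item R (k + 1) \<in> {1..K}"
    using k l setR nth_mem[of "k - 1" R] nth_mem[of k R] by (simp_all add: item_def)
  have "item R k \<noteq> item R (k + 1)"
    using k d l by (simp add: item_def nth_eq_iff_index_eq)
  moreover have "\<not> item R k < item R (k + 1)"
  proof
    assume "item R k < item R (k + 1)"
    with E in_set have "real_of_int (s (item R (k + 1)) (item R k)) \<le> thr \<delta> (n (item R (k + 1)) (item R k))"
      by blast
    with swap show False by linarith
  qed
  ultimately have "item R (k + 1) < item R k" by linarith
  with k l show ?thesis by (auto simp: bubble_step_def)
qed

lemma leader_update_bubble_steps:
  assumes "R \<in> perms K"
    and "\<forall>x\<in>{1..K}. \<forall>y\<in>{1..K}. y < x \<longrightarrow> real_of_int (s x y) \<le> thr \<delta> (n x y)"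
  shows "bubble_step\<^sup>*\<^sup>* R (leader_update K \<delta> s n R)"
  unfolding leader_update_def
proof (rule foldl_rtranclp[where P = "\<lambda>R. R \<in> perms K"])
  show "R' \<in> perms K" if "R \<in> perms K" "bubble_step R R'" for R R'
    using that perms_swap_pos_adjacent perms_length by (auto simp: bubble_step_def)
qed (use assms leader_swap_is_bubble_step in \<open>auto simp: Let_def\<close>)

lemma br_run_leader_Suc:
  "fst (br_run K \<delta> coin A X R0 (Suc t)) =
     leader_update K \<delta> (fst (snd (br_run K \<delta> coin A X R0 (Suc t))))
       (snd (snd (br_run K \<delta> coin A X R0 (Suc t)))) (fst (br_run K \<delta> coin A X R0 t))"
  by (simp add: br_step_def Let_def split: prod.split)

lemma explored_within_budget_br_run:
  assumes "R0 \<in> perms K" "event_E K \<delta> \<alpha> horizon (br_run K \<delta> coin A X R0)" "t < horizon"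
  shows "explored_within_budget K R0 (\<Union>u\<le>t. adjacent_pairs (fst (br_run K \<delta> coin A X R0 u)))
           (fst (br_run K \<delta> coin A X R0 t))"
  using assms(3)
proof (induction t)
  case 0
  then show ?case using explored_within_budget_start[OF assms(1)] by simp
next
  case (Suc t)
  let ?run = "br_run K \<delta> coin A X R0"
  have "Suc t \<in> {1..horizon}" using Suc.prems by simp
  with assms(2) have "\<forall>x\<in>{1..K}. \<forall>y\<in>{1..K}. y < x \<longrightarrow>
      real_of_int (fst (snd (?run (Suc t))) x y) \<le> thr \<delta> (snd (snd (?run (Suc t))) x y)"
    unfolding event_E_def Let_def by blast
  moreover have "fst (?run t) \<in> perms K"
    using Suc by (simp add: explored_within_budget_def)
  ultimately have "bubble_step\<^sup>*\<^sup>* (fst (?run t)) (fst (?run (Suc t)))"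
    unfolding br_run_leader_Suc[of K \<delta> coin A X R0 t] by (rule leader_update_bubble_steps[rotated])
  from explored_within_budget_bubble_steps[OF this] Suc show ?case
    by (simp add: atMost_Suc Un_commute)
qed

lemma P_set_subset_adjacent_pairs:
  assumes "fst (run (t - 1)) \<in> perms K"
  shows "P_set K \<delta> run t \<subseteq> adjacent_pairs (fst (run (t - 1)))"
  using assms mem_adjacent_pairsI[of "fst (run (t - 1))"] by (auto simp: P_set_def perms_def Let_def)

theorem lemma5:
  fixes K horizon :: nat and \<delta> :: real and R0 :: "nat list"
    and \<alpha> :: "nat \<Rightarrow> real" and \<chi> :: "nat list \<Rightarrow> nat \<Rightarrow> real"
    and coin :: "nat \<Rightarrow> nat \<Rightarrow> bool" and A :: "nat \<Rightarrow> nat \<Rightarrow> bool"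
    and X :: "nat \<Rightarrow> nat list \<Rightarrow> nat \<Rightarrow> bool"
  assumes "0 < \<delta>" and "\<delta> < 1"
    and "R0 \<in> perms K"
    and "\<forall>i\<in>{1..K}. 0 \<le> \<alpha> i \<and> \<alpha> i \<le> 1"
    and "\<forall>R\<in>perms K. \<forall>k\<in>{1..K}. 0 \<le> \<chi> R k \<and> \<chi> R k \<le> 1"
    and "click_model_assms K \<alpha> \<chi>"
    and "\<forall>i j. 1 \<le> i \<and> i < j \<and> j \<le> K \<longrightarrow> \<alpha> j < \<alpha> i"
    and "\<forall>i\<in>{1..K}. 0 < \<alpha> i"
    and "event_E K \<delta> \<alpha> horizon (br_run K \<delta> coin A X R0)"
  shows "card (\<Union>t\<in>{1..horizon}. P_set K \<delta> (br_run K \<delta> coin A X R0) t)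
           \<le> K - 1 + 2 * card (inversions K R0)"
proof (cases "horizon = 0")
  case False
  let ?run = "br_run K \<delta> coin A X R0"
  let ?U = "\<Union>u\<le>horizon - 1. adjacent_pairs (fst (?run u))"
  have leader_perms: "fst (?run t) \<in> perms K" if "t < horizon" for t
    using explored_within_budget_br_run[OF assms(3,9) that] by (simp add: explored_within_budget_def)
  have budget: "explored_within_budget K R0 ?U (fst (?run (horizon - 1)))"
    using explored_within_budget_br_run[OF assms(3,9)] False by simp
  have "(\<Union>t\<in>{1..horizon}. P_set K \<delta> ?run t) \<subseteq> ?U"
  proof (rule UN_least)
    fix t assume t: "t \<in> {1..horizon}"
    then have "P_set K \<delta> ?run t \<subseteq> adjacent_pairs (fst (?run (t - 1)))"
      by (intro P_set_subset_adjacent_pairs leader_perms) auto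
    also have "\<dots> \<subseteq> ?U" using t by (intro UN_upper) auto
    finally show "P_set K \<delta> ?run t \<subseteq> ?U" .
  qed
  then have "card (\<Union>t\<in>{1..horizon}. P_set K \<delta> ?run t) \<le> card ?U"
    using budget by (intro card_mono) (simp_all add: explored_within_budget_def)
  also have "\<dots> \<le> K - 1 + 2 * card (inversions K R0)"
    using budget by (simp add: explored_within_budget_def)
  finally show ?thesis .
qed simp

end
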